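(* Let $q$ be a power of an odd prime, $n>3$ an odd integer with $\gcd(n,q-1)=1$, $\delta\in\mathbb{F}_{q^n}^*$ with $\delta\neq1$ and multiplicative order of $\delta$ dividing $q-1$, and $0<r<n$ an integer with $\gcd(r,n)=1$. Then $S(x)=x^q+\delta x^{q^{2r+1}}$ is an exceptional scattered polynomial of index $r+1$ over $\mathbb{F}_{q^n}$.
   Context: For a polynomial $S$ with coefficients in $\mathbb{F}_{q^n}$, a positive integer $m$ and a nonnegative integer $t$, $S$ is scattered of index $t$ over $\mathbb{F}_{q^{mn}}$ if for all $y,z\in\mathbb{F}_{q^{mn}}^*$, $\frac{S(y)}{y^{q^t}}=\frac{S(z)}{z^{q^t}}$ implies $y/z\in\mathbb{F}_q$. $S$ is exceptional scattered of index $t$ (over $\mathbb{F}_{q^n}$) if there are infinitely many $m\in\mathbb{N}$ such that $S$ is scattered of index $t$ over $\mathbb{F}_{q^{mn}}$. *)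

theory Defs
  imports "HOL-Computational_Algebra.Polynomial"
begin

text \<open>We work inside an algebraically closed field K of characteristic p.
  For q a power of p, the finite field with q^k elements is realised inside K
  as the set of roots of X^(q^k) - X.\<close>

definition Fq :: "nat \<Rightarrow> nat \<Rightarrow> 'a::field set" where
  "Fq q k = {x. x ^ (q ^ k) = x}"

definition scattered_over :: "nat \<Rightarrow> nat \<Rightarrow> ('a::field \<Rightarrow> 'a) \<Rightarrow> nat \<Rightarrow> bool" where
  "scattered_over q t S N \<longleftrightarrow>
     (\<forall>y \<in> Fq q N - {0}. \<forall>z \<in> Fq q N - {0}.
        S y / y ^ (q ^ t) = S z / z ^ (q ^ t) \<longrightarrow> y / z \<in> Fq q 1)"

definition exceptional_scattered :: "nat \<Rightarrow> nat \<Rightarrow> nat \<Rightarrow> ('a::field \<Rightarrow> 'a) \<Rightarrow> bool" where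
  "exceptional_scattered q n t S \<longleftrightarrow> infinite {m::nat. m > 0 \<and> scattered_over q t S (m * n)}"

end

theory Submission
  imports Defs "HOL-Computational_Algebra.Primes"
begin

text \<open>For nonzero y in F_{q^N} write Y = y^q, s = q^r and A = Y^(s-1); then
  S(y) / y^(q^(r+1)) = 1/A + \<delta> A^s. If Z = z^q and B = Z^(s-1) give the same value with A \<noteq> B,
  additivity of A \<mapsto> A^s yields \<delta> A B (B - A)^(s-1) = 1, i.e. \<delta> W^(s-1) = 1 for the nonzero
  W = Y Z (B - A) in F_{q^N}, and taking the norm to F_q gives \<delta>^N = 1. If instead A = B, then
  y/z is fixed by the r-th and by the N-th power of Frobenius, hence lies in F_q as gcd(r, N) = 1.
  So S is scattered over F_{q^N} whenever gcd(r, N) = 1 and \<delta>^N \<noteq> 1; for N = m n both hold as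
  soon as m is coprime to (q - 1) r, because \<delta>^(q-1) = 1 \<noteq> \<delta> and gcd(n, q - 1) = 1.\<close>

lemma geometric_sum_nat:
  fixes q :: nat
  assumes "q > 0"
  shows "(q - 1) * (\<Sum>i<n. q ^ i) = q ^ n - 1"
proof -
  have "int ((q - 1) * (\<Sum>i<n. q ^ i)) = int (q ^ n - 1)"
    using power_diff_1_eq[of "int q" n] assms by (simp add: of_nat_diff)
  then show ?thesis by (simp only: of_nat_eq_iff)
qed

lemma funpow_fixpoint_multiple: "(f ^^ a) x = x \<Longrightarrow> (f ^^ (a * i)) x = x"
  by (induction i) (simp_all add: funpow_add)

lemma funpow_fixpoint_coprime:
  assumes "(f ^^ a) x = x" "(f ^^ b) x = x" "coprime a b"
  shows "f x = x"
proof (cases "a = 0")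
  case True
  then show ?thesis using assms by simp
next
  case False
  then obtain i j where "a * i = b * j + 1"
    using bezout_nat[of a b] assms(3) by auto
  then have "(f ^^ (a * i)) x = f ((f ^^ (b * j)) x)"
    by (simp add: funpow_swap1)
  then show ?thesis
    using funpow_fixpoint_multiple assms(1,2) by metis
qed

lemma power_eq_one_coprime:
  fixes x :: "'a::monoid_mult"
  assumes "x ^ a = 1" "x ^ b = 1" "coprime a b"
  shows "x = 1"
proof -
  have "(times x ^^ n) 1 = x ^ n" for n
    by (induction n) simp_all
  then show ?thesis
    using funpow_fixpoint_coprime[where f = "times x" and x = 1] assms by simp
qed

lemma power_power_eq_funpow:
  fixes x :: "'a::monoid_mult"
  shows "x ^ (q ^ j) = ((\<lambda>y. y ^ q) ^^ j) x"
  by (induction j) (simp_all add: power_mult mult.commute[of q])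

lemma frobenius_diff:
  fixes x y :: "'a::field"
  assumes "prime CHAR('a)" "q = CHAR('a) ^ k"
  shows "(x - y) ^ (q ^ j) = x ^ (q ^ j) - y ^ (q ^ j)"
proof -
  have "q ^ j = CHAR('a) ^ (k * j)"
    using assms(2) by (simp add: power_mult)
  then show ?thesis
    using freshmans_dream'[OF assms(1), of "q ^ j" "k * j" "x - y" y] by simp
qed

lemma frobenius_eq_iff:
  fixes x y :: "'a::field"
  assumes "prime CHAR('a)" "q = CHAR('a) ^ k"
  shows "x ^ (q ^ j) = y ^ (q ^ j) \<longleftrightarrow> x = y"
  using frobenius_diff[OF assms, of x y j] by (metis eq_iff_diff_eq_0 power_eq_0_iff)

lemma Fq_mult: "x \<in> Fq q N \<Longrightarrow> y \<in> Fq q N \<Longrightarrow> x * y \<in> Fq q N"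
  by (simp add: Fq_def power_mult_distrib)

lemma Fq_divide: "x \<in> Fq q N \<Longrightarrow> y \<in> Fq q N \<Longrightarrow> x / y \<in> Fq q N"
  by (simp add: Fq_def power_divide)

lemma Fq_power: "x \<in> Fq q N \<Longrightarrow> x ^ m \<in> Fq q N"
  unfolding Fq_def by (simp flip: power_mult) (simp only: mult.commute[of m] power_mult)

lemma Fq_diff:
  fixes x y :: "'a::field"
  assumes "prime CHAR('a)" "q = CHAR('a) ^ k"
  shows "x \<in> Fq q N \<Longrightarrow> y \<in> Fq q N \<Longrightarrow> x - y \<in> Fq q N"
  by (simp add: Fq_def frobenius_diff[OF assms])

lemma Fq_subset_Fq_mult: "Fq q a \<subseteq> Fq q (a * i)"
  using funpow_fixpoint_multiple[where f = "\<lambda>y. y ^ q"] by (auto simp: Fq_def power_power_eq_funpow)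

lemma Fq_coprime:
  assumes "x \<in> Fq q a" "x \<in> Fq q b" "coprime a b"
  shows "x \<in> Fq q 1"
  using funpow_fixpoint_coprime[where f = "\<lambda>y. y ^ q"] assms
  by (simp add: Fq_def power_power_eq_funpow)

definition Fq_norm :: "nat \<Rightarrow> nat \<Rightarrow> 'a::field \<Rightarrow> 'a" where
  "Fq_norm q N x = x ^ (\<Sum>i<N. q ^ i)"

lemma Fq_norm_mult: "Fq_norm q N (x * y) = Fq_norm q N x * Fq_norm q N y"
  by (simp add: Fq_norm_def power_mult_distrib)

lemma Fq_norm_Fq_one:
  assumes "x \<in> Fq q 1"
  shows "Fq_norm q N x = x ^ N"
proof -
  have "x ^ (q ^ i) = x" for i
    using Fq_subset_Fq_mult[of q 1 i] assms by (auto simp: Fq_def)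
  then show ?thesis
    by (simp add: Fq_norm_def power_sum)
qed

lemma Fq_norm_power_frobenius_minus_one:
  assumes "W \<in> Fq q N" "W \<noteq> 0" "q > 0"
  shows "Fq_norm q N (W ^ (q ^ r - 1)) = 1"
proof -
  have "W ^ (q ^ N - 1) * W = W ^ q ^ N"
    using assms(3) by (simp flip: power_Suc2)
  then have W_unit: "W ^ (q ^ N - 1) = 1"
    using assms(1,2) by (simp add: Fq_def)
  have "(q ^ r - 1) * (\<Sum>i<N. q ^ i) = (q - 1) * (\<Sum>i<N. q ^ i) * (\<Sum>i<r. q ^ i)"
    by (simp only: geometric_sum_nat[OF assms(3), symmetric] ac_simps)
  also have "\<dots> = (q ^ N - 1) * (\<Sum>i<r. q ^ i)"
    by (simp only: geometric_sum_nat[OF assms(3)])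
  finally have "Fq_norm q N (W ^ (q ^ r - 1)) = (W ^ (q ^ N - 1)) ^ (\<Sum>i<r. q ^ i)"
    unfolding Fq_norm_def by (simp only: flip: power_mult)
  then show ?thesis
    using W_unit by simp
qed

lemma quotient_eq_inverse_plus_frobenius:
  fixes y \<delta> :: "'a::field"
  assumes "y \<noteq> 0" "q > 0"
  shows "(y ^ q + \<delta> * y ^ (q ^ (2 * r + 1))) / y ^ (q ^ (r + 1))
    = 1 / (y ^ q) ^ (q ^ r - 1) + \<delta> * ((y ^ q) ^ (q ^ r - 1)) ^ (q ^ r)"
proof -
  define s where "s = q ^ r"
  define Y where "Y = y ^ q"
  have "Y \<noteq> 0"
    using assms(1) by (simp add: Y_def)
  have Y_s: "Y ^ s = Y * Y ^ (s - 1)"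
    using assms(2) by (simp add: s_def flip: power_Suc)
  have exponents: "q ^ (r + 1) = q * s" "q ^ (2 * r + 1) = q * s * s"
    by (simp_all add: s_def power_add mult_2)
  have "y ^ (q ^ (r + 1)) = Y ^ s" "y ^ (q ^ (2 * r + 1)) = (Y ^ s) ^ s"
    by (simp_all only: exponents Y_def power_mult)
  then show ?thesis
    using \<open>Y \<noteq> 0\<close> by (simp add: Y_def [symmetric] flip: s_def) (simp add: Y_s power_mult_distrib field_simps)
qed

lemma inverse_plus_frobenius_eq_imp:
  fixes A B \<delta> :: "'a::field"
  assumes "prime CHAR('a)" "s = CHAR('a) ^ k"
    and "A \<noteq> 0" "B \<noteq> 0" "A \<noteq> B"
    and "1 / A + \<delta> * A ^ s = 1 / B + \<delta> * B ^ s"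
  shows "\<delta> * (A * B * (B - A) ^ (s - 1)) = 1"
proof -
  have "B - A = \<delta> * A * B * (B ^ s - A ^ s)"
    using assms(3,4,6) by (simp add: field_simps)
  also have "\<dots> = \<delta> * A * B * (B - A) ^ s"
    using frobenius_diff[OF assms(1,2), where j = 1] by simp
  also have "\<dots> = \<delta> * (A * B * (B - A) ^ (s - 1)) * (B - A)"
    using power_minus_mult[of s "B - A"] prime_gt_0_nat[OF assms(1)] assms(2) by (simp add: ac_simps)
  finally show ?thesis
    using assms(5) by simp
qed

lemma scattered_over_if_power_ne_one:
  fixes \<delta> :: "'a::field"
  assumes char: "prime CHAR('a)" "q = CHAR('a) ^ k"
    and \<delta>: "\<delta> \<in> Fq q 1" "\<delta> ^ N \<noteq> 1" and "coprime r N"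
  shows "scattered_over q (r + 1) (\<lambda>x. x ^ q + \<delta> * x ^ (q ^ (2 * r + 1))) N"
  unfolding scattered_over_def
proof (intro ballI impI)
  fix y z :: 'a
  assume y: "y \<in> Fq q N - {0}" and z: "z \<in> Fq q N - {0}"
    and eq: "(y ^ q + \<delta> * y ^ (q ^ (2 * r + 1))) / y ^ q ^ (r + 1) =
             (z ^ q + \<delta> * z ^ (q ^ (2 * r + 1))) / z ^ q ^ (r + 1)"
  define s where "s = q ^ r"
  define A where "A = (y ^ q) ^ (s - 1)"
  define B where "B = (z ^ q) ^ (s - 1)"
  have "q > 0"
    using char prime_gt_0_nat by simp
  have "A \<noteq> 0" "B \<noteq> 0"
    using y z by (simp_all add: A_def B_def)
  have quotient: "(x ^ q + \<delta> * x ^ (q ^ (2 * r + 1))) / x ^ q ^ (r + 1)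
      = 1 / (x ^ q) ^ (s - 1) + \<delta> * ((x ^ q) ^ (s - 1)) ^ s" if "x \<noteq> 0" for x
    unfolding s_def using that \<open>q > 0\<close> by (rule quotient_eq_inverse_plus_frobenius)
  have "1 / A + \<delta> * A ^ s = (y ^ q + \<delta> * y ^ (q ^ (2 * r + 1))) / y ^ q ^ (r + 1)"
    unfolding A_def using y by (intro quotient[symmetric]) simp
  also have "\<dots> = (z ^ q + \<delta> * z ^ (q ^ (2 * r + 1))) / z ^ q ^ (r + 1)"
    by (rule eq)
  also have "\<dots> = 1 / B + \<delta> * B ^ s"
    unfolding B_def using z by (intro quotient) simp
  finally have "1 / A + \<delta> * A ^ s = 1 / B + \<delta> * B ^ s" .
  show "y / z \<in> Fq q 1"
  proof (cases "A = B")
    case True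
    have "((y / z) ^ q) ^ (s - 1) = 1"
      using True \<open>B \<noteq> 0\<close> by (simp add: A_def B_def power_divide)
    then have "((y / z) ^ q) ^ s = (y / z) ^ q"
      using power_minus_mult[of s "(y / z) ^ q"] \<open>q > 0\<close> by (simp add: s_def)
    then have "((y / z) ^ (q ^ r)) ^ q = (y / z) ^ q"
      by (simp add: s_def flip: power_mult) (simp add: mult.commute)
    then have "y / z \<in> Fq q r"
      using frobenius_eq_iff[OF char, where x = "(y / z) ^ (q ^ r)" and y = "y / z" and j = 1]
      by (simp add: Fq_def)
    moreover have "y / z \<in> Fq q N"
      using y z by (simp add: Fq_divide)
    ultimately show ?thesis
      using \<open>coprime r N\<close> by (rule Fq_coprime)
  next
    case False
    define W where "W = y ^ q * z ^ q * (B - A)"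
    have "W \<in> Fq q N"
      using y z by (simp add: W_def A_def B_def Fq_mult Fq_power Fq_diff[OF char])
    have "W \<noteq> 0"
      using y z False by (simp add: W_def)
    have "s = CHAR('a) ^ (k * r)"
      using char(2) by (simp add: s_def power_mult)
    then have "\<delta> * (A * B * (B - A) ^ (s - 1)) = 1"
      by (rule inverse_plus_frobenius_eq_imp[OF char(1) _ \<open>A \<noteq> 0\<close> \<open>B \<noteq> 0\<close> False
            \<open>1 / A + \<delta> * A ^ s = 1 / B + \<delta> * B ^ s\<close>])
    then have "\<delta> * W ^ (q ^ r - 1) = 1"
      by (simp add: W_def A_def B_def s_def power_mult_distrib)
    then have "Fq_norm q N \<delta> = 1"
      using Fq_norm_mult[of q N \<delta>] Fq_norm_power_frobenius_minus_one[OF \<open>W \<in> Fq q N\<close> \<open>W \<noteq> 0\<close> \<open>q > 0\<close>]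
      by (metis Fq_norm_def mult_1_right power_one)
    then show ?thesis
      using \<delta> by (simp add: Fq_norm_Fq_one)
  qed
qed

lemma infinite_coprime_nat:
  fixes c :: nat
  assumes "c > 0"
  shows "infinite {m. m > 0 \<and> coprime m c}"
proof -
  have "coprime (1 + j * c) c" for j
    using gcd_add_mult[of c j 1] by (simp add: coprime_iff_gcd_eq_1 gcd.commute add.commute)
  then have "range (\<lambda>j. 1 + j * c) \<subseteq> {m. m > 0 \<and> coprime m c}"
    by auto
  moreover have "inj (\<lambda>j. 1 + j * c)"
    using assms by (simp add: inj_def)
  ultimately show ?thesis
    using infinite_super range_inj_infinite by blast
qed

theorem mainTheorem14:
  fixes p k q n r :: nat and \<delta> :: "'a::alg_closed_field"
  assumes "prime p" and "odd p" and "CHAR('a) = p"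
    and "k > 0" and "q = p ^ k"
    and "odd n" and "n > 3" and "coprime n (q - 1)"
    and "\<delta> \<in> Fq q n" and "\<delta> \<noteq> 0" and "\<delta> \<noteq> 1" and "\<delta> ^ (q - 1) = 1"
    and "0 < r" and "r < n" and "coprime r n"
  shows "exceptional_scattered q n (r + 1) (\<lambda>x::'a. x ^ q + \<delta> * x ^ (q ^ (2 * r + 1)))"
proof -
  have char: "prime CHAR('a)" "q = CHAR('a) ^ k"
    using assms by simp_all
  have "q > 1"
    using assms prime_gt_1_nat[of p] one_less_power[of p k] by simp
  then have "\<delta> \<in> Fq q 1"
    using power_minus_mult[of q \<delta>] \<open>\<delta> ^ (q - 1) = 1\<close> by (simp add: Fq_def)
  have "scattered_over q (r + 1) (\<lambda>x::'a. x ^ q + \<delta> * x ^ (q ^ (2 * r + 1))) (m * n)"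
    if "coprime m ((q - 1) * r)" for m
  proof (rule scattered_over_if_power_ne_one[OF char \<open>\<delta> \<in> Fq q 1\<close>])
    show "\<delta> ^ (m * n) \<noteq> 1"
      using power_eq_one_coprime[of \<delta> "m * n" "q - 1"] that assms by auto
    show "coprime r (m * n)"
      using that assms by (simp add: coprime_commute)
  qed
  then have "{m. m > 0 \<and> coprime m ((q - 1) * r)}
      \<subseteq> {m. m > 0 \<and> scattered_over q (r + 1) (\<lambda>x::'a. x ^ q + \<delta> * x ^ (q ^ (2 * r + 1))) (m * n)}"
    by blast
  moreover have "infinite {m. m > 0 \<and> coprime m ((q - 1) * r)}"
    using \<open>q > 1\<close> assms by (intro infinite_coprime_nat) simp
  ultimately show ?thesis
    unfolding exceptional_scattered_def by (rule infinite_super)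
qed

end
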